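(* Let $\mathcal{T}=(V,A,E,f,q)$ be a decorated tree and let $e=\{v,\alpha\}$ be an edge with $v\in V$ and $\alpha\in A\setminus A_0$. If $N_v=0$, then $q(e,v)$ divides $f(\alpha)$.
   Context: A graph is a pair $(X_0,X_1)$ of finite sets such that each element of $X_1$ (an edge) is a $2$-element subset of $X_0$; elements of $X_0$ are cells. A path is a tuple $(x_0,\dots,x_n)$ ($n\ge0$) of cells with $\{x_i,x_{i+1}\}$ an edge for each $i<n$, these edges pairwise distinct; a cell/edge is in the path if it is some $x_i$ / some $\{x_i,x_{i+1}\}$. The graph is a tree if any two cells $x,y$ are joined by a unique path $\gamma_{x,y}$. A decorated tree is $(V,A,E,f,q)$ with $V$ (vertices), $A$ (arrows) finite disjoint sets, $(V\cup A,E)$ a tree, every arrow contained in exactly one edge, $f:A\to\mathbb{Z}$, $q(e,x)\in\mathbb{Z}$ for each $e\in E$, $x\in e$, with $q(e,\alpha)=1$ for $\alpha\in A$, and for each $v\in V$ and distinct edges $e,e'\ni v$, $\gcd(q(e,v),q(e',v))=1$. $A_0=\{\alpha\in A:f(\alpha)=0\}$. An edge $\varepsilon$ is incident to a path $\gamma$ if it is not in $\gamma$ but contains a cell $u$ of $\gamma$; $q(\varepsilon,\gamma):=q(\varepsilon,u)$. For $v\ne\alpha$, $v\in V\cup A$, $\alpha\in A$: $x_{v,\alpha}=f(\alpha)\prod_\varepsilon q(\varepsilon,\gamma_{v,\alpha})$ over edges incident to $\gamma_{v,\alpha}$ (empty product $=1$). For $v\in V\cup A_0$, $N_v=\sum_{\alpha\in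 A\setminus A_0}x_{v,\alpha}$. *)

theory Defs
  imports Main
begin

definition is_graph :: "'a set \<Rightarrow> 'a set set \<Rightarrow> bool" where
  "is_graph X0 X1 \<longleftrightarrow> finite X0 \<and> finite X1 \<and> (\<forall>e\<in>X1. e \<subseteq> X0 \<and> card e = 2)"

definition path_edges :: "'a list \<Rightarrow> 'a set list" where
  "path_edges xs = map (\<lambda>i. {xs ! i, xs ! Suc i}) [0..<length xs - 1]"

definition is_path :: "'a set \<Rightarrow> 'a set set \<Rightarrow> 'a list \<Rightarrow> bool" where
  "is_path X0 X1 xs \<longleftrightarrow> xs \<noteq> [] \<and> set xs \<subseteq> X0 \<and>
     set (path_edges xs) \<subseteq> X1 \<and> distinct (path_edges xs)"

definition is_tree :: "'a set \<Rightarrow> 'a set set \<Rightarrow> bool" where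
  "is_tree X0 X1 \<longleftrightarrow> is_graph X0 X1 \<and>
     (\<forall>x\<in>X0. \<forall>y\<in>X0. \<exists>!p. is_path X0 X1 p \<and> hd p = x \<and> last p = y)"

definition gamma :: "'a set \<Rightarrow> 'a set set \<Rightarrow> 'a \<Rightarrow> 'a \<Rightarrow> 'a list" where
  "gamma X0 X1 x y = (THE p. is_path X0 X1 p \<and> hd p = x \<and> last p = y)"

definition decorated_tree ::
  "'a set \<Rightarrow> 'a set \<Rightarrow> 'a set set \<Rightarrow> ('a \<Rightarrow> int) \<Rightarrow> ('a set \<Rightarrow> 'a \<Rightarrow> int) \<Rightarrow> bool" where
  "decorated_tree V A E f q \<longleftrightarrow>
     finite V \<and> finite A \<and> V \<inter> A = {} \<and> is_tree (V \<union> A) E \<and>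
     (\<forall>\<alpha>\<in>A. card {e\<in>E. \<alpha> \<in> e} = 1) \<and>
     (\<forall>e\<in>E. \<forall>\<alpha>\<in>A. \<alpha> \<in> e \<longrightarrow> q e \<alpha> = 1) \<and>
     (\<forall>v\<in>V. \<forall>e\<in>E. \<forall>e'\<in>E. v \<in> e \<longrightarrow> v \<in> e' \<longrightarrow> e \<noteq> e' \<longrightarrow> gcd (q e v) (q e' v) = 1)"

definition A0 :: "'a set \<Rightarrow> ('a \<Rightarrow> int) \<Rightarrow> 'a set" where
  "A0 A f = {\<alpha>\<in>A. f \<alpha> = 0}"

definition incident_edges :: "'a set set \<Rightarrow> 'a list \<Rightarrow> 'a set set" where
  "incident_edges E \<gamma> = {\<epsilon>\<in>E. \<epsilon> \<notin> set (path_edges \<gamma>) \<and> \<epsilon> \<inter> set \<gamma> \<noteq> {}}"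

definition q_path :: "('a set \<Rightarrow> 'a \<Rightarrow> int) \<Rightarrow> 'a set \<Rightarrow> 'a list \<Rightarrow> int" where
  "q_path q \<epsilon> \<gamma> = q \<epsilon> (SOME u. u \<in> \<epsilon> \<and> u \<in> set \<gamma>)"

definition x_coef ::
  "'a set \<Rightarrow> 'a set \<Rightarrow> 'a set set \<Rightarrow> ('a \<Rightarrow> int) \<Rightarrow> ('a set \<Rightarrow> 'a \<Rightarrow> int) \<Rightarrow> 'a \<Rightarrow> 'a \<Rightarrow> int" where
  "x_coef V A E f q v \<alpha> =
     (let \<gamma> = gamma (V \<union> A) E v \<alpha> in f \<alpha> * (\<Prod>\<epsilon>\<in>incident_edges E \<gamma>. q_path q \<epsilon> \<gamma>))"

definition N_val ::
  "'a set \<Rightarrow> 'a set \<Rightarrow> 'a set set \<Rightarrow> ('a \<Rightarrow> int) \<Rightarrow> ('a set \<Rightarrow> 'a \<Rightarrow> int) \<Rightarrow> 'a \<Rightarrow> int" where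
  "N_val V A E f q v = (\<Sum>\<alpha>\<in>A - A0 A f. x_coef V A E f q v \<alpha>)"

end

theory Submission
  imports Defs
begin

(* Write N_v = 0 as x_{v,alpha} = - sum of the x_{v,beta} with beta <> alpha.  The arrow alpha is a
   leaf, so the path from v to any other arrow beta avoids it; hence e is incident to that path at v
   and q(e,v) divides x_{v,beta}.  The path from v to alpha is (v, alpha) itself, whose incident
   edges all meet it at v, so x_{v,alpha} is f(alpha) times a product of numbers q(eps,v) coprime
   to q(e,v).  Thus q(e,v) divides f(alpha). *)

lemma gamma_spec:
  assumes "is_tree X0 X1" "x \<in> X0" "y \<in> X0"
  shows "is_path X0 X1 (gamma X0 X1 x y) \<and> hd (gamma X0 X1 x y) = x \<and> last (gamma X0 X1 x y) = y"
proof -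
  have "\<exists>!p. is_path X0 X1 p \<and> hd p = x \<and> last p = y"
    using assms unfolding is_tree_def by blast
  then show ?thesis unfolding gamma_def by (rule theI')
qed

lemma gamma_unique:
  assumes "is_tree X0 X1" "x \<in> X0" "y \<in> X0" "is_path X0 X1 p" "hd p = x" "last p = y"
  shows "gamma X0 X1 x y = p"
proof -
  have "\<exists>!p. is_path X0 X1 p \<and> hd p = x \<and> last p = y"
    using assms unfolding is_tree_def by blast
  then show ?thesis unfolding gamma_def using assms by (intro the1_equality) auto
qed

lemma length_path_edges: "length (path_edges xs) = length xs - 1"
  by (simp add: path_edges_def)

lemma nth_path_edges: "i < length xs - 1 \<Longrightarrow> path_edges xs ! i = {xs ! i, xs ! Suc i}"
  by (simp add: path_edges_def)

lemma path_edge_subset: "\<epsilon> \<in> set (path_edges p) \<Longrightarrow> \<epsilon> \<subseteq> set p"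
  by (auto simp: path_edges_def)

text \<open>An interior cell of a path lies in two distinct edges of the path.\<close>

lemma leaf_notin_path:
  assumes path: "is_path X0 X1 p" and "hd p \<noteq> a" "last p \<noteq> a"
    and leaf: "\<And>\<epsilon>. \<epsilon> \<in> X1 \<Longrightarrow> a \<in> \<epsilon> \<Longrightarrow> \<epsilon> = e"
  shows "a \<notin> set p"
proof
  assume "a \<in> set p"
  then obtain i where i: "i < length p" "p ! i = a" by (auto simp: in_set_conv_nth)
  have "p \<noteq> []" using path by (simp add: is_path_def)
  with i assms(2,3) have "i \<noteq> 0" "i \<noteq> length p - 1"
    by (metis hd_conv_nth, metis last_conv_nth)
  then obtain j where j: "i = Suc j" and i_less: "i < length p - 1"
    using i(1) by (cases i) auto
  have distinct: "distinct (path_edges p)" and edges: "set (path_edges p) \<subseteq> X1"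
    using path by (auto simp: is_path_def)
  have on_edge: "path_edges p ! k = e" if "k < length p - 1" "a \<in> path_edges p ! k" for k
    using edges that leaf by (metis length_path_edges nth_mem subsetD)
  have "path_edges p ! i = e" "path_edges p ! j = e"
    using on_edge[of i] on_edge[of j] i j i_less by (simp_all add: nth_path_edges)
  then show False
    using nth_eq_iff_index_eq[OF distinct, of j i] i_less j by (simp add: length_path_edges)
qed

lemma q_path_eq:
  assumes "\<epsilon> \<inter> set \<gamma> = {u}"
  shows "q_path q \<epsilon> \<gamma> = q \<epsilon> u"
proof -
  have "(SOME u'. u' \<in> \<epsilon> \<and> u' \<in> set \<gamma>) = u"
    using assms by (intro some_equality) auto
  then show ?thesis by (simp add: q_path_def)
qed

lemma decorated_tree_arrow_edge_unique:
  assumes "decorated_tree V A E f q" "\<alpha> \<in> A"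
    and "e \<in> E" "\<alpha> \<in> e" "\<epsilon> \<in> E" "\<alpha> \<in> \<epsilon>"
  shows "\<epsilon> = e"
proof -
  have "card {e\<in>E. \<alpha> \<in> e} = 1"
    using assms(1,2) by (simp add: decorated_tree_def)
  then obtain z where z: "{e\<in>E. \<alpha> \<in> e} = {z}" by (rule card_1_singletonE)
  have "e \<in> {e\<in>E. \<alpha> \<in> e}" "\<epsilon> \<in> {e\<in>E. \<alpha> \<in> e}"
    using assms(3-6) by simp_all
  then show ?thesis unfolding z by simp
qed

lemma q_edge_dvd_x_coef_other_arrow:
  assumes dt: "decorated_tree V A E f q"
    and e: "e \<in> E" "e = {v, \<alpha>}" and "v \<in> V" "\<alpha> \<in> A" "\<beta> \<in> A" "\<beta> \<noteq> \<alpha>"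
  shows "q e v dvd x_coef V A E f q v \<beta>"
proof -
  have tree: "is_tree (V \<union> A) E" and "V \<inter> A = {}"
    using dt by (auto simp: decorated_tree_def)
  then have "v \<noteq> \<alpha>" using assms(4,5) by blast
  define \<gamma> where "\<gamma> = gamma (V \<union> A) E v \<beta>"
  have \<gamma>: "is_path (V \<union> A) E \<gamma>" "hd \<gamma> = v" "last \<gamma> = \<beta>"
    unfolding \<gamma>_def using gamma_spec[OF tree] assms(4,6) by auto
  have "\<alpha> \<notin> set \<gamma>"
  proof (rule leaf_notin_path[OF \<gamma>(1)])
    show "hd \<gamma> \<noteq> \<alpha>" "last \<gamma> \<noteq> \<alpha>"
      using \<gamma>(2,3) \<open>v \<noteq> \<alpha>\<close> \<open>\<beta> \<noteq> \<alpha>\<close> by simp_all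
    show "\<epsilon> = e" if "\<epsilon> \<in> E" "\<alpha> \<in> \<epsilon>" for \<epsilon>
      using decorated_tree_arrow_edge_unique[OF dt \<open>\<alpha> \<in> A\<close> e(1) _ that] e(2) by simp
  qed
  moreover have "v \<in> set \<gamma>"
    using \<gamma>(1,2) by (metis hd_in_set is_path_def)
  ultimately have "e \<inter> set \<gamma> = {v}" "e \<notin> set (path_edges \<gamma>)"
    using e(2) path_edge_subset[of e \<gamma>] by auto
  then have incident: "e \<in> incident_edges E \<gamma>" and "q_path q e \<gamma> = q e v"
    using e(1) by (auto simp: incident_edges_def intro: q_path_eq)
  moreover have "finite (incident_edges E \<gamma>)"
    using tree by (simp add: is_tree_def is_graph_def incident_edges_def)
  ultimately have "q e v dvd (\<Prod>\<epsilon>\<in>incident_edges E \<gamma>. q_path q \<epsilon> \<gamma>)"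
    using dvd_prodI[of "incident_edges E \<gamma>" e "\<lambda>\<epsilon>. q_path q \<epsilon> \<gamma>"] by simp
  then show ?thesis unfolding x_coef_def Let_def \<gamma>_def[symmetric] by simp
qed

lemma q_edge_dvd_x_coef_adjacent_arrow_iff:
  assumes dt: "decorated_tree V A E f q"
    and e: "e \<in> E" "e = {v, \<alpha>}" and "v \<in> V" "\<alpha> \<in> A"
  shows "q e v dvd x_coef V A E f q v \<alpha> \<longleftrightarrow> q e v dvd f \<alpha>"
proof -
  have tree: "is_tree (V \<union> A) E"
    using dt by (simp add: decorated_tree_def)
  define \<gamma> where "\<gamma> = [v, \<alpha>]"
  have edges: "path_edges \<gamma> = [e]"
    using e(2) by (simp add: \<gamma>_def path_edges_def)
  then have "is_path (V \<union> A) E \<gamma>"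
    using e(1) assms(4,5) unfolding is_path_def \<gamma>_def by simp
  then have "gamma (V \<union> A) E v \<alpha> = \<gamma>"
    using gamma_unique[OF tree] assms(4,5) by (simp add: \<gamma>_def)
  then have x: "x_coef V A E f q v \<alpha> = f \<alpha> * (\<Prod>\<epsilon>\<in>incident_edges E \<gamma>. q_path q \<epsilon> \<gamma>)"
    by (simp add: x_coef_def)
  have "coprime (q e v) (q_path q \<epsilon> \<gamma>)" if "\<epsilon> \<in> incident_edges E \<gamma>" for \<epsilon>
  proof -
    have \<epsilon>: "\<epsilon> \<in> E" "\<epsilon> \<noteq> e" "\<epsilon> \<inter> {v, \<alpha>} \<noteq> {}"
      using that edges by (simp_all add: incident_edges_def \<gamma>_def)
    then have "\<alpha> \<notin> \<epsilon>"
      using decorated_tree_arrow_edge_unique[OF dt \<open>\<alpha> \<in> A\<close> e(1)] e(2) by blast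
    with \<epsilon>(3) have "\<epsilon> \<inter> set \<gamma> = {v}" "v \<in> \<epsilon>"
      by (auto simp: \<gamma>_def)
    then have "q_path q \<epsilon> \<gamma> = q \<epsilon> v"
      by (simp add: q_path_eq)
    moreover have "gcd (q e v) (q \<epsilon> v) = 1"
      using dt assms(4) e \<epsilon>(1,2) \<open>v \<in> \<epsilon>\<close> by (auto simp: decorated_tree_def)
    ultimately show ?thesis by (simp add: coprime_iff_gcd_eq_1)
  qed
  then have "coprime (q e v) (\<Prod>\<epsilon>\<in>incident_edges E \<gamma>. q_path q \<epsilon> \<gamma>)"
    by (simp add: prod_coprime_right)
  then show ?thesis
    using x by (simp add: coprime_dvd_mult_left_iff)
qed

theorem lemma1p12:
  fixes V A :: "'a set" and E :: "'a set set" and f :: "'a \<Rightarrow> int"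
    and q :: "'a set \<Rightarrow> 'a \<Rightarrow> int" and v \<alpha> :: 'a and e :: "'a set"
  assumes "decorated_tree V A E f q"
    and "e \<in> E" and "e = {v, \<alpha>}" and "v \<in> V" and "\<alpha> \<in> A - A0 A f"
    and "N_val V A E f q v = 0"
  shows "q e v dvd f \<alpha>"
proof -
  let ?x = "x_coef V A E f q v" and ?S = "A - A0 A f"
  have "finite ?S"
    using assms(1) by (simp add: decorated_tree_def)
  then have "?x \<alpha> = - (\<Sum>\<beta>\<in>?S - {\<alpha>}. ?x \<beta>)"
    using sum.remove[of ?S \<alpha> ?x] assms(5,6) by (simp add: N_val_def)
  moreover have "q e v dvd (\<Sum>\<beta>\<in>?S - {\<alpha>}. ?x \<beta>)"
    using q_edge_dvd_x_coef_other_arrow[OF assms(1-4)] assms(5) by (intro dvd_sum) auto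
  ultimately have "q e v dvd ?x \<alpha>"
    by simp
  then show ?thesis
    using q_edge_dvd_x_coef_adjacent_arrow_iff[OF assms(1-4)] assms(5) by simp
qed

end
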